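(* Let $c\in Z^{10}$ with $\sum_i c_i=0$, $t\nmid C_i$ for all odd $i$, $t\mid C_3+C_5$, and $t\nmid C_i+C_{i+2}$ for all odd $i\neq 3$ (indices mod $10$). Then there exists $\beta\in\mathbb{C}\setminus\{0,-1,-2\}$ such that $\mathbb{M}(c)\cong\mathbb{M}_\beta$ as $B_{5,10}$-modules.
   Context: Let $Z=\mathbb{C}[[t]]$. Let $\Gamma_{10}$ be the quiver with vertices $0,1,\dots,9$ (indices taken mod $10$) on a cycle and arrows $x_i\colon i-1\to i$, $y_i\colon i\to i-1$ for $i=1,\dots,10$. Let $B_{5,10}$ be the completed path algebra of $\Gamma_{10}$ modulo the closed ideal generated by $xy=yx$ and $x^5=y^5$ at every vertex. For $b=(b_1,\dots,b_{10})\in Z^{10}$ with $\sum_i b_i=0$, the $B_{5,10}$-module $\mathbb{M}(b)$ has $V_i=Z\oplus Z$ at every vertex, and for odd $j$: $x_j=\begin{pmatrix} t& b_j\\ 0&1\end{pmatrix}$, $y_j=\begin{pmatrix} 1&-b_j\\0&t\end{pmatrix}$; for even $j$: $x_j=\begin{pmatrix}1&b_j\\0&t\end{pmatrix}$, $y_j=\begin{pmatrix}t&-b_j\\0&1\end{pmatrix}$. An isomorphism $\mathbb{M}(b)\to\mathbb{M}(c)$ is a family of invertible $Z$-linear maps $\varphi_i\colon Z^2\to Z^2$ commuting with all $x_i$ and $y_i$. For odd $i$ write $B_i=b_i+b_{i+1}$ and $C_i=c_i+c_{i+1}$ (indices mod $10$). For $\beta\in\mathbb{C}\setminus\{0,-1,-2\}$,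 $\mathbb{M}_\beta$ denotes $\mathbb{M}(b)$ for a tuple $b$ with $B_1=\beta$, $B_3=1$, $B_5=-1$, $B_7=-\beta-1$, $B_9=1$ (e.g. $b_i=B_i$ for odd $i$ and $b_i=0$ for even $i$). *)

theory Defs
  imports "HOL-Analysis.Analysis" "HOL-Computational_Algebra.Formal_Power_Series"
begin

(* Z = C[[t]] is  complex fps ; t is fps_X.
   Z-linear maps Z^2 -> Z^2 are 2x2 matrices (complex fps ^2^2) acting on column vectors. *)

definition mat2 :: "'a::zero \<Rightarrow> 'a \<Rightarrow> 'a \<Rightarrow> 'a \<Rightarrow> 'a^2^2" where
  "mat2 a b c d = (\<chi> i j. if i = 1 then (if j = 1 then a else b) else (if j = 1 then c else d))"

(* tuples b = (b_1,...,b_10) are functions nat => complex fps; only indices 1..10 matter *)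

(* matrix of x_j in M(b), x_j : V_{j-1} -> V_j *)
definition Xmat :: "(nat \<Rightarrow> complex fps) \<Rightarrow> nat \<Rightarrow> complex fps^2^2" where
  "Xmat b j = (if odd j then mat2 fps_X (b j) 0 1 else mat2 1 (b j) 0 fps_X)"

(* matrix of y_j in M(b), y_j : V_j -> V_{j-1} *)
definition Ymat :: "(nat \<Rightarrow> complex fps) \<Rightarrow> nat \<Rightarrow> complex fps^2^2" where
  "Ymat b j = (if odd j then mat2 1 (- b j) 0 fps_X else mat2 fps_X (- b j) 0 1)"

definition M_iso :: "(nat \<Rightarrow> complex fps) \<Rightarrow> (nat \<Rightarrow> complex fps) \<Rightarrow> bool" where
  "M_iso b c \<longleftrightarrow> (\<exists>\<phi> :: nat \<Rightarrow> complex fps^2^2.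
      (\<forall>i<10. invertible (\<phi> i)) \<and>
      (\<forall>j\<in>{1..10}. \<phi> (j mod 10) ** Xmat b j = Xmat c j ** \<phi> (j - 1) \<and>
                    \<phi> (j - 1) ** Ymat b j = Ymat c j ** \<phi> (j mod 10)))"

definition beta_tuple :: "complex \<Rightarrow> nat \<Rightarrow> complex fps" where
  "beta_tuple \<beta> i = (if i = 1 then fps_const \<beta> else if i = 3 then 1 else if i = 5 then -1
      else if i = 7 then fps_const (- \<beta> - 1) else if i = 9 then 1 else 0)"

end

theory Submission
  imports Defs
begin

(* Since every x_j has determinant t on both sides, all det phi_j coincide, so only phi_0 has
   to be invertible.  Taking phi_j with diagonal p_j, r_j and constant lower left entry s
   (times t at even vertices), the intertwining relations make p_j and r_j affine in the
   partial sums of e and c, and the upper right entries exist iff t divides a bilinear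
   expression at the even vertices.  For e = beta_tuple beta and constant p_0, r_0, s this says
   that the Moebius map A |-> v A / (u - s A) sends the constant terms 0, A_2 = A_6, A_4, A_8 of
   the even partial sums of c to 0, beta, beta + 1, -1.  The hypotheses (some of them redundant)
   make these four points distinct, and beta is a square root of a
   cross-ratio minus 1. *)

lemma fps_X_dvd_iff: "fps_X dvd (f :: 'a::comm_ring_1 fps) \<longleftrightarrow> fps_nth f 0 = 0"
proof
  assume "fps_X dvd f"
  then show "fps_nth f 0 = 0" by (auto elim: dvdE)
next
  assume "fps_nth f 0 = 0"
  then have "f = fps_X * fps_shift 1 f"
    by (intro fps_ext) simp
  then show "fps_X dvd f" by (metis dvd_triv_left)
qed

lemma mat2_mult:
  "mat2 a b c d ** mat2 a' b' c' d' =
     mat2 (a * a' + b * c') (a * b' + b * d') (c * a' + d * c') (c * b' + d * d')"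
  by (simp add: matrix_matrix_mult_def mat2_def vec_eq_iff forall_2 sum_2)

lemma mat2_eq_iff: "mat2 a b c d = mat2 a' b' c' d' \<longleftrightarrow> a = a' \<and> b = b' \<and> c = c' \<and> d = d'"
  by (simp add: mat2_def vec_eq_iff forall_2)

lemma mat2_expand: "A = mat2 (A $ 1 $ 1) (A $ 1 $ 2) (A $ 2 $ 1) (A $ 2 $ 2)"
  by (simp add: mat2_def vec_eq_iff forall_2)

lemma mat_1_eq_mat2: "mat 1 = mat2 1 0 0 1"
  by (simp add: mat_def mat2_def vec_eq_iff forall_2)

lemma det_mat2 [simp]: "det (mat2 a b c d) = a * d - b * c"
  by (simp add: det_2 mat2_def)

lemma invertible_if_is_unit_det:
  fixes A :: "'a::comm_ring_1^2^2"
  assumes "det A dvd 1"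
  shows "invertible A"
proof -
  obtain a b c d where A: "A = mat2 a b c d" by (metis mat2_expand)
  from assms obtain k where k: "(a * d - b * c) * k = 1" by (auto simp: A elim: dvdE)
  have "A ** mat2 (d * k) (- b * k) (- c * k) (a * k) = mat 1"
    and "mat2 (d * k) (- b * k) (- c * k) (a * k) ** A = mat 1"
    using k by (simp_all add: A mat2_mult mat_1_eq_mat2 mat2_eq_iff algebra_simps)
  then show ?thesis unfolding invertible_def by blast
qed

lemma det_Xmat: "det (Xmat b j) = fps_X"
  by (simp add: Xmat_def)

lemma M_iso_if_intertwining:
  fixes \<Phi> :: "nat \<Rightarrow> complex fps^2^2"
  assumes unit: "is_unit (det (\<Phi> 0))"
    and intertwine: "\<And>j. j \<in> {1..10} \<Longrightarrow>
      \<Phi> (j mod 10) ** Xmat b j = Xmat c j ** \<Phi> (j - 1) \<and>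
      \<Phi> (j - 1) ** Ymat b j = Ymat c j ** \<Phi> (j mod 10)"
  shows "M_iso b c"
proof -
  have det_const: "det (\<Phi> i) = det (\<Phi> 0)" if "i < 10" for i
    using that
  proof (induction i)
    case (Suc i)
    have j: "Suc i \<in> {1..10}" "Suc i mod 10 = Suc i" using Suc.prems by auto
    have "\<Phi> (Suc i) ** Xmat b (Suc i) = Xmat c (Suc i) ** \<Phi> i"
      using intertwine[OF j(1)] j(2) by simp
    then have "det (\<Phi> (Suc i)) * fps_X = fps_X * det (\<Phi> i)"
      by (metis det_mul det_Xmat)
    then show ?case using Suc by simp
  qed simp
  have "invertible (\<Phi> i)" if "i < 10" for i
    using unit unfolding det_const[OF that, symmetric] by (rule invertible_if_is_unit_det)
  with intertwine show ?thesis unfolding M_iso_def by blast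
qed

definition phi_mat ::
  "(nat \<Rightarrow> complex fps) \<Rightarrow> (nat \<Rightarrow> complex fps) \<Rightarrow> (nat \<Rightarrow> complex fps) \<Rightarrow> complex fps \<Rightarrow> nat \<Rightarrow> complex fps^2^2"
  where "phi_mat p q r s j = mat2 (p j) (q j) (if odd j then s else fps_X * s) (r j)"

lemma phi_mat_intertwines:
  assumes "j \<ge> 1"
    and p: "p j = p (j - 1) + e j * s" and r: "r (j - 1) = r j + c j * s"
    and q_odd: "odd j \<Longrightarrow> q j = fps_X * q (j - 1) + (e j * r (j - 1) - p j * c j)"
    and q_even: "even j \<Longrightarrow> fps_X * q j = q (j - 1) + (e j * r (j - 1) - p j * c j)"
  shows "phi_mat p q r s j ** Xmat c j = Xmat e j ** phi_mat p q r s (j - 1)"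
    and "phi_mat p q r s (j - 1) ** Ymat c j = Ymat e j ** phi_mat p q r s j"
proof -
  have "odd (j - 1) \<longleftrightarrow> even j" using \<open>j \<ge> 1\<close> by (cases j) auto
  then show "phi_mat p q r s j ** Xmat c j = Xmat e j ** phi_mat p q r s (j - 1)"
    and "phi_mat p q r s (j - 1) ** Ymat c j = Ymat e j ** phi_mat p q r s j"
    using p r q_odd q_even
    by (cases "odd j"; simp add: phi_mat_def Xmat_def Ymat_def mat2_mult mat2_eq_iff algebra_simps)+
qed

definition psum :: "(nat \<Rightarrow> 'a::comm_monoid_add) \<Rightarrow> nat \<Rightarrow> 'a"
  where "psum f j = (\<Sum>i=1..j. f i)"

lemma psum_0 [simp]: "psum f 0 = 0"
  by (simp add: psum_def)

lemma psum_Suc [simp]: "psum f (Suc j) = psum f j + f (Suc j)"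
  by (simp add: psum_def)

lemma M_iso_if_partial_sums:
  fixes c e :: "nat \<Rightarrow> complex fps" and p0 r0 s :: "complex fps"
  assumes c_sum: "psum c 10 = 0" and e_sum: "psum e 10 = 0" and unit: "is_unit (p0 * r0)"
    and dvd: "\<And>j. j \<in> {2, 4, 6, 8} \<Longrightarrow>
      fps_X dvd (psum e j * r0 - p0 * psum c j - s * psum e j * psum c j)"
  shows "M_iso c e"
proof -
  define p where "p j = p0 + s * psum e j" for j
  define r where "r j = r0 - s * psum c j" for j
  \<comment> \<open>\<open>Q j\<close> is the partial sum of the defects \<open>e i * r (i - 1) - p i * c i\<close>, \<open>i \<le> j\<close>
     (summation by parts); the relations for the \<open>x\<close>-arrows force \<open>q j = Q j\<close> at odd
     and \<open>q j = Q j / t\<close> at even vertices.\<close>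
  define Q where "Q j = psum e j * r0 - p0 * psum c j - s * psum e j * psum c j" for j
  define q where "q j = (if even j then Q j div fps_X else Q j)" for j
  have Q_Suc: "Q (Suc j) = Q j + (e (Suc j) * r j - p (Suc j) * c (Suc j))" for j
    by (simp add: Q_def p_def r_def algebra_simps)
  have Q_dvd: "fps_X dvd Q j" if "even j" "j \<le> 10" for j
  proof -
    from that have "j \<in> {0, 10} \<or> j \<in> {2, 4, 6, 8}" by (auto elim!: evenE)
    then show ?thesis using c_sum e_sum dvd by (auto simp: Q_def)
  qed
  have q_X: "fps_X * q j = (if even j then Q j else fps_X * Q j)" if "j \<le> 10" for j
    using Q_dvd[OF _ that] by (simp add: q_def dvd_mult_div_cancel del: fps_divide_X)
  have \<Phi>_period: "phi_mat p q r s 10 = phi_mat p q r s 0"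
    using c_sum e_sum by (simp add: phi_mat_def p_def r_def q_def Q_def)
  show ?thesis
  proof (rule M_iso_if_intertwining)
    show "is_unit (det (phi_mat p q r s 0))"
      using unit by (simp add: phi_mat_def p_def r_def q_def Q_def)
  next
    fix j :: nat
    assume "j \<in> {1..10}"
    then obtain i where j: "j = Suc i" "i < 10" by (cases j) auto
    have "phi_mat p q r s (j mod 10) = phi_mat p q r s j"
      using j \<Phi>_period by (cases "j = 10") simp_all
    moreover have
      "phi_mat p q r s j ** Xmat c j = Xmat e j ** phi_mat p q r s (j - 1)"
      "phi_mat p q r s (j - 1) ** Ymat c j = Ymat e j ** phi_mat p q r s j"
      using j q_X[of i] q_X[of j] unfolding j(1)
      by (intro phi_mat_intertwines; simp add: p_def r_def q_def Q_Suc algebra_simps)+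
    ultimately show "phi_mat p q r s (j mod 10) ** Xmat c j = Xmat e j ** phi_mat p q r s (j - 1) \<and>
      phi_mat p q r s (j - 1) ** Ymat c j = Ymat e j ** phi_mat p q r s (j mod 10)"
      by simp
  qed
qed

lemma moebius_normalisation:
  fixes a\<^sub>1 a\<^sub>2 a\<^sub>3 :: complex
  assumes "distinct [0, a\<^sub>1, a\<^sub>2, a\<^sub>3]"
  obtains \<beta> u v s where "\<beta> \<notin> {0, -1, -2}" "u * v \<noteq> 0"
    "\<beta> * u - v * a\<^sub>1 - s * \<beta> * a\<^sub>1 = 0"
    "(\<beta> + 1) * u - v * a\<^sub>2 - s * (\<beta> + 1) * a\<^sub>2 = 0"
    "(- 1) * u - v * a\<^sub>3 - s * (- 1) * a\<^sub>3 = 0"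
proof -
  define g where "g = csqrt (a\<^sub>2 * (a\<^sub>3 - a\<^sub>1) / (a\<^sub>3 * (a\<^sub>2 - a\<^sub>1)))"
  have "a\<^sub>3 * (a\<^sub>2 - a\<^sub>1) \<noteq> 0" using assms by auto
  then have g: "g\<^sup>2 * (a\<^sub>3 * (a\<^sub>2 - a\<^sub>1)) = a\<^sub>2 * (a\<^sub>3 - a\<^sub>1)"
    by (simp add: g_def)
  have "g \<noteq> 0" using g assms by auto
  moreover have "g\<^sup>2 \<noteq> 1"
  proof
    assume "g\<^sup>2 = 1"
    with g have "a\<^sub>1 * (a\<^sub>2 - a\<^sub>3) = 0" by (simp add: algebra_simps)
    with assms show False by simp
  qed
  then have "g \<noteq> 1" "g \<noteq> -1" by auto
  ultimately have "g - 1 \<notin> {0, -1, -2}"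
    by (auto simp: algebra_simps)
  moreover have "(a\<^sub>1 * a\<^sub>2) * ((g - 1) * (a\<^sub>2 - a\<^sub>1) * g) \<noteq> 0"
    using assms \<open>g \<noteq> 0\<close> \<open>g - 1 \<notin> {0, -1, -2}\<close> by auto
  ultimately show ?thesis
    using g by (intro that[of "g - 1" "a\<^sub>1 * a\<^sub>2" "(g - 1) * (a\<^sub>2 - a\<^sub>1) * g" "a\<^sub>1 - (g - 1) * (a\<^sub>2 - a\<^sub>1)"])
      (auto simp: power2_eq_square algebra_simps)
qed

theorem proposition2p9:
  fixes c :: "nat \<Rightarrow> complex fps"
  assumes "(\<Sum>i=1..10. c i) = 0"
    and "\<forall>i\<in>{1,3,5,7,9}. \<not> fps_X dvd (c i + c (i+1))"
    and "fps_X dvd ((c 3 + c 4) + (c 5 + c 6))"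
    and "\<not> fps_X dvd ((c 1 + c 2) + (c 3 + c 4))"
    and "\<not> fps_X dvd ((c 5 + c 6) + (c 7 + c 8))"
    and "\<not> fps_X dvd ((c 7 + c 8) + (c 9 + c 10))"
    and "\<not> fps_X dvd ((c 9 + c 10) + (c 1 + c 2))"
  shows "\<exists>\<beta>::complex. \<beta> \<notin> {0, -1, -2} \<and> M_iso c (beta_tuple \<beta>)"
proof -
  define A where "A j = fps_nth (psum c j) 0" for j
  have c_sum: "psum c 10 = 0"
    using assms(1) by (simp add: psum_def)
  have pairs: "c 1 + c 2 = psum c 2" "c 3 + c 4 = psum c 4 - psum c 2"
    "c 5 + c 6 = psum c 6 - psum c 4" "c 7 + c 8 = psum c 8 - psum c 6" "c 9 + c 10 = psum c 10 - psum c 8"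
    by (simp_all add: eval_nat_numeral)
  have "\<not> fps_X dvd (c 1 + c 2)" "\<not> fps_X dvd (c 3 + c 4)"
    "\<not> fps_X dvd (c 7 + c 8)" "\<not> fps_X dvd (c 9 + c 10)"
    using assms(2) by (simp_all add: numeral_2_eq_2)
  with assms(3-5) c_sum have distinct: "distinct [0, A 2, A 4, A 8]" and A_6: "A 6 = A 2"
    unfolding pairs by (auto simp: A_def fps_X_dvd_iff)
  obtain \<beta> u v s where \<beta>: "\<beta> \<notin> {0, -1, -2}" and "u * v \<noteq> 0"
    and "\<beta> * u - v * A 2 - s * \<beta> * A 2 = 0"
    and "(\<beta> + 1) * u - v * A 4 - s * (\<beta> + 1) * A 4 = 0"
    and "(- 1) * u - v * A 8 - s * (- 1) * A 8 = 0"
    using moebius_normalisation[OF distinct] by blast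
  moreover have "psum (beta_tuple \<beta>) 2 = fps_const \<beta>" "psum (beta_tuple \<beta>) 4 = fps_const (\<beta> + 1)"
    "psum (beta_tuple \<beta>) 6 = fps_const \<beta>" "psum (beta_tuple \<beta>) 8 = - 1"
    "psum (beta_tuple \<beta>) 10 = 0"
    by (simp_all add: beta_tuple_def eval_nat_numeral algebra_simps flip: fps_const_add)
  ultimately have "M_iso c (beta_tuple \<beta>)"
    using c_sum A_6
    by (intro M_iso_if_partial_sums[of c _ "fps_const v" "fps_const u" "fps_const s"])
      (auto simp: fps_X_dvd_iff A_def[symmetric] algebra_simps)
  with \<beta> show ?thesis by blast
qed

end
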